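(* Let $C_n>0$ and suppose $\lambda\ge\phi\,n^{1/3}/C_n^{1/3}$ for some constant $\phi>0$ not depending on $n$ or $C_n$. Then the predictions $x_t$ of FLH-OGD satisfy $$\sum_{t=1}^n(y_t-x_t)^2-(y_t-u_t)^2\le c\,(\log n)^p\max\{n^{1/3}C_n^{2/3},1\},$$ where $c>0$ depends only on $B,G,\phi$ and $p\ge0$ is an absolute constant (i.e. the regret is $\tilde O(n^{1/3}C_n^{2/3}\vee1)$).
   Context: Squared loss game: $n\ge 3$, $B\ge 1$, $G\ge B$; for $t=1,\dots,n$ the learner predicts $x_t\in[-B,B]$, then the adversary reveals $y_t\in[-G,G]$. $[a,b]=\{a,\dots,b\}$. FLH-OGD: For each $j\in[n]$ a base learner $E^j$ is started at time $j$; it runs projected online gradient descent on $[-B,B]$ on the losses $x\mapsto (y_t-x)^2$, $t\ge j$: its first prediction $x^{(j)}_j$ is a fixed point of $[-B,B]$, and $x^{(j)}_{t+1}=\Pi\big(x^{(j)}_t-\tfrac{1}{2\tau}\cdot 2(x^{(j)}_t-y_t)\big)$ with $\tau=t-j+1$, $\Pi$ the projection onto $[-B,B]$. The FLH meta-algorithm with learning rate $\zeta$ keeps a probability vector $v_t=(v_t^{(1)},\dots,v_t^{(t)})$, $v_1=(1)$; it predicts $x_t=\sum_{j\le t}v_t^{(j)}x^{(j)}_t$; after $y_t$ is revealed it sets $\hat v^{(i)}_{t+1}=v_t^{(i)}e^{-\zeta(y_t-x_t^{(i)})^2}/\sum_{j\le t}v_t^{(j)}e^{-\zeta(y_t-x_t^{(j)})^2}$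 for $i\le t$, then $v^{(t+1)}_{t+1}=1/(t+1)$ and $v^{(i)}_{t+1}=(1-\tfrac1{t+1})\hat v^{(i)}_{t+1}$. FLH-OGD uses $\zeta=1/(2(G+B)^2)$. Offline optimal: $u_1,\dots,u_n$ is an optimal solution of: minimize $\frac12\sum_{t=1}^n(y_t-\tilde u_t)^2$ subject to $\sum_{t=2}^{n}|\tilde u_t-\tilde u_{t-1}|\le C_n$ and $-B\le\tilde u_t\le B$; with optimal dual variables $\lambda\ge0$ (TV constraint) and $\gamma^\pm_t\ge0$ (box constraints) satisfying the KKT conditions: there are $s_t\in[-1,1]$ with $s_t=\mathrm{sign}(u_{t+1}-u_t)$ whenever $u_{t+1}\ne u_t$, $s_0=s_n=0$, $u_t-y_t=\lambda(s_t-s_{t-1})+\gamma_t^--\gamma_t^+$, and $\lambda(\sum_{t=2}^n|u_t-u_{t-1}|-C_n)=0$, $\gamma_t^-(u_t+B)=0$, $\gamma_t^+(u_t-B)=0$. *)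

theory Defs
  imports Complex_Main
begin

definition proj_box :: "real \<Rightarrow> real \<Rightarrow> real" where
  "proj_box B x = max (- B) (min B x)"

(* ogd_aux B x0 y j k = prediction of base learner E^j at time t = j + k
   (projected OGD on [-B,B], losses (y_t - x)^2, step 1/(2 tau), tau = t - j + 1) *)
fun ogd_aux :: "real \<Rightarrow> real \<Rightarrow> (nat \<Rightarrow> real) \<Rightarrow> nat \<Rightarrow> nat \<Rightarrow> real" where
  "ogd_aux B x0 y j 0 = x0"
| "ogd_aux B x0 y j (Suc k) =
     (let x = ogd_aux B x0 y j k; t = j + k; tau = real (k + 1)
      in proj_box B (x - (1 / (2 * tau)) * (2 * (x - y t))))"

definition ogd_pred :: "real \<Rightarrow> real \<Rightarrow> (nat \<Rightarrow> real) \<Rightarrow> nat \<Rightarrow> nat \<Rightarrow> real" where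
  "ogd_pred B x0 y j t = ogd_aux B x0 y j (t - j)"

fun flh_v :: "real \<Rightarrow> real \<Rightarrow> real \<Rightarrow> (nat \<Rightarrow> real) \<Rightarrow> nat \<Rightarrow> nat \<Rightarrow> real" where
  "flh_v B G x0 y 0 = (\<lambda>i. 0)"
| "flh_v B G x0 y (Suc 0) = (\<lambda>i. if i = 1 then 1 else 0)"
| "flh_v B G x0 y (Suc (Suc t)) =
     (let tt = Suc t; v = flh_v B G x0 y tt; zeta = 1 / (2 * (G + B)^2);
          L = (\<lambda>i. exp (- zeta * (y tt - ogd_pred B x0 y i tt)^2));
          Z = (\<Sum>j = 1..tt. v j * L j)
      in (\<lambda>i. if i = Suc tt then 1 / real (Suc tt)
               else if 1 \<le> i \<and> i \<le> tt then (1 - 1 / real (Suc tt)) * (v i * L i / Z)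
               else 0))"

definition flh_ogd_pred :: "real \<Rightarrow> real \<Rightarrow> real \<Rightarrow> (nat \<Rightarrow> real) \<Rightarrow> nat \<Rightarrow> real" where
  "flh_ogd_pred B G x0 y t = (\<Sum>j = 1..t. flh_v B G x0 y t j * ogd_pred B x0 y j t)"

definition tv_feasible :: "real \<Rightarrow> real \<Rightarrow> nat \<Rightarrow> (nat \<Rightarrow> real) \<Rightarrow> bool" where
  "tv_feasible B Cn n u \<longleftrightarrow>
     (\<Sum>t = 2..n. \<bar>u t - u (t - 1)\<bar>) \<le> Cn \<and> (\<forall>t \<in> {1..n}. - B \<le> u t \<and> u t \<le> B)"

definition offline_opt :: "real \<Rightarrow> real \<Rightarrow> nat \<Rightarrow> (nat \<Rightarrow> real) \<Rightarrow> (nat \<Rightarrow> real) \<Rightarrow> bool" where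
  "offline_opt B Cn n y u \<longleftrightarrow> tv_feasible B Cn n u \<and>
     (\<forall>u'. tv_feasible B Cn n u' \<longrightarrow>
        (1/2) * (\<Sum>t = 1..n. (y t - u t)^2) \<le> (1/2) * (\<Sum>t = 1..n. (y t - u' t)^2))"

(* KKT conditions for u with dual variables lam (TV) and gm, gp (box) *)
definition offline_kkt :: "real \<Rightarrow> real \<Rightarrow> nat \<Rightarrow> (nat \<Rightarrow> real) \<Rightarrow> (nat \<Rightarrow> real)
    \<Rightarrow> real \<Rightarrow> (nat \<Rightarrow> real) \<Rightarrow> (nat \<Rightarrow> real) \<Rightarrow> bool" where
  "offline_kkt B Cn n y u lam gm gp \<longleftrightarrow>
     lam \<ge> 0 \<and> (\<forall>t \<in> {1..n}. gm t \<ge> 0 \<and> gp t \<ge> 0) \<and>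
     (\<exists>s :: nat \<Rightarrow> real.
        (\<forall>t \<in> {0..n}. \<bar>s t\<bar> \<le> 1) \<and> s 0 = 0 \<and> s n = 0 \<and>
        (\<forall>t \<in> {1..<n}. u (t + 1) \<noteq> u t \<longrightarrow> s t = sgn (u (t + 1) - u t)) \<and>
        (\<forall>t \<in> {1..n}. u t - y t = lam * (s t - s (t - 1)) + gm t - gp t)) \<and>
     lam * ((\<Sum>t = 2..n. \<bar>u t - u (t - 1)\<bar>) - Cn) = 0 \<and>
     (\<forall>t \<in> {1..n}. gm t * (u t + B) = 0 \<and> gp t * (u t - B) = 0)"

end

theory Submission
  imports Defs "HOL-Analysis.Analysis"
begin

text \<open>Projected online gradient descent started at time \<open>j\<close> has logarithmic regret on every
  interval \<open>[j, b]\<close> against every constant in the box, since the square loss is strongly convex, and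
  FLH loses only a further logarithmic amount against each of its experts, since the square loss is
  exp-concave on the box. So FLH-OGD has regret \<open>R = O(log n)\<close> on every interval against every
  constant comparator.

  Against the KKT point \<open>u\<close> this is spent bin by bin. Between consecutive change points \<open>u\<close> is a
  constant \<open>v\<close>, and summing the stationarity condition \<open>u - y = lam (s\<^sub>t - s\<^sub>t\<^sub>-\<^sub>1)\<close> over such a
  piece shows that the residuals \<open>y - u\<close> sum to \<open>0\<close> when \<open>u\<close> passes monotonically through \<open>v\<close>
  and to \<open>\<plusminus>2 lam\<close> at a local extremum. Pieces are merged into bins of length below \<open>l0\<close> and
  variation below \<open>V0\<close>: on a bin whose residual sums vanish, a constant is within \<open>l0 V0\<^sup>2\<close> of \<open>u\<close>,
  and at an extremum away from the boundary of the box the constant \<open>v \<plusminus> K/(2 lam)\<close> beats \<open>u\<close> by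
  at least \<open>K\<close> on a short piece. A potential charging \<open>K/l0\<close> per time step and \<open>K/V0\<close> per unit of variation pays for
  every closed bin, so the regret is \<open>O(K (n/l0 + Cn/V0))\<close>, which is \<open>O(K\<^sup>2 n\<^sup>1\<^sup>/\<^sup>3 Cn\<^sup>2\<^sup>/\<^sup>3)\<close> for
  suitable \<open>l0\<close> and \<open>V0\<close> as long as \<open>B lam \<ge> K\<close>. If instead \<open>B lam < K\<close>, the lower bound on
  \<open>lam\<close> forces \<open>n \<le> (K/\<phi>)\<^sup>2 n\<^sup>1\<^sup>/\<^sup>3 Cn\<^sup>2\<^sup>/\<^sup>3\<close> and the trivial bound suffices.\<close>

section \<open>Online gradient descent on an interval\<close>

lemma proj_box_bounds: "0 \<le> B \<Longrightarrow> - B \<le> proj_box B x \<and> proj_box B x \<le> B"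
  unfolding proj_box_def by auto

lemma proj_box_nonexpansive: "- B \<le> w \<Longrightarrow> w \<le> B \<Longrightarrow> \<bar>proj_box B x - w\<bar> \<le> \<bar>x - w\<bar>"
  unfolding proj_box_def by (auto simp: max_def min_def abs_if)

lemma ogd_aux_bounds:
  "0 \<le> B \<Longrightarrow> - B \<le> x0 \<Longrightarrow> x0 \<le> B \<Longrightarrow> - B \<le> ogd_aux B x0 y j k \<and> ogd_aux B x0 y j k \<le> B"
  by (cases k) (auto simp: Let_def proj_box_bounds)

lemma ogd_pred_bounds:
  "0 \<le> B \<Longrightarrow> - B \<le> x0 \<Longrightarrow> x0 \<le> B \<Longrightarrow> - B \<le> ogd_pred B x0 y j t \<and> ogd_pred B x0 y j t \<le> B"
  unfolding ogd_pred_def by (rule ogd_aux_bounds)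

lemma square_le_square_if_abs_le: "\<bar>a\<bar> \<le> b \<Longrightarrow> a\<^sup>2 \<le> (b::real)\<^sup>2"
  using power_mono[of "\<bar>a\<bar>" b 2] by simp

lemma square_loss_le: "- B \<le> x \<Longrightarrow> x \<le> B \<Longrightarrow> \<bar>y\<bar> \<le> G \<Longrightarrow> (y - x)\<^sup>2 \<le> (G + B :: real)\<^sup>2"
  by (rule square_le_square_if_abs_le) linarith

text \<open>Projection onto the box is nonexpansive, so this is the usual step inequality of gradient
  descent with step size \<open>1/(2\<tau>)\<close> on the \<open>2\<close>-strongly convex loss \<open>(y - x)\<^sup>2\<close>.\<close>
lemma ogd_step_regret:
  fixes x yv w tau B :: real
  assumes "0 < tau" "- B \<le> w" "w \<le> B"
  shows "(yv - x)\<^sup>2 - (yv - w)\<^sup>2 \<le> (tau - 1) * (x - w)\<^sup>2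
     - tau * (proj_box B (x - (1 / (2 * tau)) * (2 * (x - yv))) - w)\<^sup>2 + (x - yv)\<^sup>2 / tau"
proof -
  define z where "z = x - (1 / (2 * tau)) * (2 * (x - yv))"
  have "(proj_box B z - w)\<^sup>2 \<le> (z - w)\<^sup>2"
    using square_le_square_if_abs_le[OF proj_box_nonexpansive[OF assms(2,3)]] by simp
  then have "tau * (proj_box B z - w)\<^sup>2 \<le> tau * (z - w)\<^sup>2"
    using assms(1) by (simp add: mult_left_mono)
  moreover have "tau * (z - w)\<^sup>2 = tau * (x - w)\<^sup>2 - 2 * (x - w) * (x - yv) + (x - yv)\<^sup>2 / tau"
    unfolding z_def using assms(1) by (simp add: field_simps power2_eq_square)
  moreover have "(yv - x)\<^sup>2 - (yv - w)\<^sup>2 = 2 * (x - yv) * (x - w) - (x - w)\<^sup>2"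
    by (simp add: power2_eq_square algebra_simps)
  ultimately show ?thesis unfolding z_def[symmetric] by (simp add: algebra_simps)
qed

lemma ogd_aux_regret:
  assumes "0 \<le> B" "- B \<le> w" "w \<le> B"
  shows "(\<Sum>k<m. (y (j + k) - ogd_aux B x0 y j k)\<^sup>2 - (y (j + k) - w)\<^sup>2)
     \<le> - real m * (ogd_aux B x0 y j m - w)\<^sup>2
        + (\<Sum>k<m. (ogd_aux B x0 y j k - y (j + k))\<^sup>2 / (real k + 1))"
proof (induction m)
  case (Suc m)
  let ?x = "ogd_aux B x0 y j m"
  have "(y (j + m) - ?x)\<^sup>2 - (y (j + m) - w)\<^sup>2 \<le> (real (m + 1) - 1) * (?x - w)\<^sup>2
     - real (m + 1) * (ogd_aux B x0 y j (Suc m) - w)\<^sup>2 + (?x - y (j + m))\<^sup>2 / real (m + 1)"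
    using ogd_step_regret[of "real (m + 1)" B w "y (j + m)" ?x] assms by (simp add: Let_def)
  then show ?case using Suc.IH by (simp add: algebra_simps)
qed simp

lemma harm_le_one_plus_ln: "0 < m \<Longrightarrow> harm m \<le> 1 + ln (real m)"
  using euler_mascheroni_sequence_decreasing[of 1 m] by (simp add: harm_def)

lemma ogd_interval_regret:
  assumes B: "0 \<le> B" "- B \<le> x0" "x0 \<le> B" and w: "- B \<le> w" "w \<le> B"
    and "j \<le> s" and y_bounded: "\<forall>t\<in>{j..s}. \<bar>y t\<bar> \<le> G"
  shows "(\<Sum>t=j..s. (y t - ogd_pred B x0 y j t)\<^sup>2 - (y t - w)\<^sup>2) \<le> (G + B)\<^sup>2 * (1 + ln (real (s - j + 1)))"
proof -
  define m where "m = s - j + 1"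
  have "(\<Sum>t=j..s. (y t - ogd_pred B x0 y j t)\<^sup>2 - (y t - w)\<^sup>2)
      = (\<Sum>k<m. (y (j + k) - ogd_aux B x0 y j k)\<^sup>2 - (y (j + k) - w)\<^sup>2)"
    using sum.atLeastAtMost_shift_0[OF \<open>j \<le> s\<close>,
        where g = "\<lambda>t. (y t - ogd_pred B x0 y j t)\<^sup>2 - (y t - w)\<^sup>2"]
    by (simp add: ogd_pred_def m_def atLeast0AtMost lessThan_Suc_atMost)
  also have "\<dots> \<le> - real m * (ogd_aux B x0 y j m - w)\<^sup>2
        + (\<Sum>k<m. (ogd_aux B x0 y j k - y (j + k))\<^sup>2 / (real k + 1))"
    by (rule ogd_aux_regret[OF B(1) w])
  also have "\<dots> \<le> (\<Sum>k<m. (ogd_aux B x0 y j k - y (j + k))\<^sup>2 / (real k + 1))"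
    by simp
  also have "\<dots> \<le> (\<Sum>k<m. (G + B)\<^sup>2 / (real k + 1))"
  proof (rule sum_mono)
    fix k assume "k \<in> {..<m}"
    then have "\<bar>y (j + k)\<bar> \<le> G" using y_bounded \<open>j \<le> s\<close> unfolding m_def by auto
    then have "(y (j + k) - ogd_aux B x0 y j k)\<^sup>2 \<le> (G + B)\<^sup>2"
      by (intro square_loss_le) (use ogd_aux_bounds[OF B] in auto)
    then show "(ogd_aux B x0 y j k - y (j + k))\<^sup>2 / (real k + 1) \<le> (G + B)\<^sup>2 / (real k + 1)"
      by (simp add: divide_right_mono power2_commute)
  qed
  also have "\<dots> = (G + B)\<^sup>2 * harm m"
    by (simp add: harm_altdef sum_distrib_left field_simps)
  also have "\<dots> \<le> (G + B)\<^sup>2 * (1 + ln (real m))"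
    by (intro mult_left_mono harm_le_one_plus_ln) (auto simp: m_def)
  finally show ?thesis unfolding m_def .
qed

section \<open>Follow the leading history\<close>

definition flh_likelihood :: "real \<Rightarrow> real \<Rightarrow> real \<Rightarrow> (nat \<Rightarrow> real) \<Rightarrow> nat \<Rightarrow> nat \<Rightarrow> real" where
  "flh_likelihood B G x0 y t i = exp (- (1 / (2 * (G + B)\<^sup>2)) * (y t - ogd_pred B x0 y i t)\<^sup>2)"

lemma flh_v_Suc_Suc:
  "flh_v B G x0 y (Suc (Suc t)) i =
    (if i = Suc (Suc t) then 1 / real (Suc (Suc t))
     else if 1 \<le> i \<and> i \<le> Suc t then (1 - 1 / real (Suc (Suc t))) *
       (flh_v B G x0 y (Suc t) i * flh_likelihood B G x0 y (Suc t) i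
         / (\<Sum>j=1..Suc t. flh_v B G x0 y (Suc t) j * flh_likelihood B G x0 y (Suc t) j))
     else 0)"
  by (simp add: flh_likelihood_def Let_def)

lemma flh_v_distribution:
  "(\<forall>i\<in>{1..Suc t}. 0 < flh_v B G x0 y (Suc t) i) \<and> (\<Sum>i=1..Suc t. flh_v B G x0 y (Suc t) i) = 1"
proof (induction t)
  case (Suc t)
  let ?v = "flh_v B G x0 y (Suc t)" and ?L = "flh_likelihood B G x0 y (Suc t)"
  let ?Z = "\<Sum>j=1..Suc t. ?v j * ?L j" and ?c = "1 - 1 / real (Suc (Suc t))"
  have L_pos: "0 < ?L i" for i by (simp add: flh_likelihood_def)
  have Z_pos: "0 < ?Z" using Suc.IH L_pos by (intro sum_pos) auto
  have c_pos: "0 < ?c" by (simp add: field_simps)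
  have "\<forall>i\<in>{1..Suc (Suc t)}. 0 < flh_v B G x0 y (Suc (Suc t)) i"
    using Suc.IH L_pos Z_pos c_pos by (auto simp: flh_v_Suc_Suc simp del: flh_v.simps)
  moreover have "(\<Sum>i=1..Suc (Suc t). flh_v B G x0 y (Suc (Suc t)) i)
      = (\<Sum>i=1..Suc t. flh_v B G x0 y (Suc (Suc t)) i) + 1 / real (Suc (Suc t))"
    by (simp add: sum.cl_ivl_Suc flh_v_Suc_Suc[of _ _ _ _ _ "Suc (Suc t)"] del: flh_v.simps)
  moreover have "(\<Sum>i=1..Suc t. flh_v B G x0 y (Suc (Suc t)) i) = (\<Sum>i=1..Suc t. ?c * (?v i * ?L i / ?Z))"
    by (rule sum.cong) (simp_all add: flh_v_Suc_Suc del: flh_v.simps)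
  moreover have "(\<Sum>i=1..Suc t. ?c * (?v i * ?L i / ?Z)) = ?c"
    using Z_pos by (simp add: sum_distrib_left[symmetric] sum_divide_distrib[symmetric])
  ultimately show ?case by simp
qed simp

lemma flh_v_pos: "1 \<le> i \<Longrightarrow> i \<le> t \<Longrightarrow> 0 < flh_v B G x0 y t i"
  using flh_v_distribution[of "t - 1" B G x0 y] by auto

lemma flh_v_sum: "1 \<le> t \<Longrightarrow> (\<Sum>i=1..t. flh_v B G x0 y t i) = 1"
  using flh_v_distribution[of "t - 1" B G x0 y] by auto

lemma flh_ogd_pred_bounds:
  assumes "0 \<le> B" "- B \<le> x0" "x0 \<le> B" "1 \<le> t"
  shows "- B \<le> flh_ogd_pred B G x0 y t \<and> flh_ogd_pred B G x0 y t \<le> B"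
proof -
  have "(\<Sum>j = 1..t. flh_v B G x0 y t j *\<^sub>R ogd_pred B x0 y j t) \<in> {-B..B}"
    by (rule convex_sum)
      (use flh_v_sum[OF assms(4)] flh_v_pos ogd_pred_bounds[OF assms(1-3)] in \<open>auto simp: less_imp_le\<close>)
  then show ?thesis unfolding flh_ogd_pred_def by simp
qed

text \<open>Exp-concavity: with \<open>\<zeta> = 1/(2(G+B)\<^sup>2)\<close> the second derivative of
  \<open>exp (-\<zeta>(y - x)\<^sup>2)\<close> is \<open>exp (-\<zeta>(y - x)\<^sup>2) ((2\<zeta>(y - x))\<^sup>2 - 2\<zeta>)\<close>, which is
  nonpositive as long as \<open>\<bar>y - x\<bar> \<le> G + B\<close>.\<close>
lemma concave_on_exp_square_loss:
  fixes yv :: real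
  assumes "\<bar>yv\<bar> \<le> G" "0 < G + B"
  shows "concave_on {-B..B} (\<lambda>x. exp (- (1 / (2 * (G + B)\<^sup>2)) * (yv - x)\<^sup>2))"
proof -
  define z where "z = 1 / (2 * (G + B)\<^sup>2)"
  have z_pos: "0 < z" and z_GB: "z * (G + B)\<^sup>2 = 1 / 2"
    unfolding z_def using assms(2) by auto
  have "concave_on {-B..B} (\<lambda>x. exp (- z * (yv - x)\<^sup>2))"
  proof (rule f''_le0_imp_concave)
    fix x :: real assume "x \<in> {-B..B}"
    then have "(yv - x)\<^sup>2 \<le> (G + B)\<^sup>2" using assms(1) by (intro square_loss_le) auto
    then have "2 * z * (z * (yv - x)\<^sup>2) \<le> 2 * z * (z * (G + B)\<^sup>2)"
      using z_pos by (intro mult_left_mono) auto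
    then have "(2 * z * (yv - x))\<^sup>2 \<le> 2 * z"
      unfolding z_GB by (simp add: power2_eq_square algebra_simps)
    then show "exp (- z * (yv - x)\<^sup>2) * ((2 * z * (yv - x))\<^sup>2 - 2 * z) \<le> 0"
      by (simp add: mult_nonneg_nonpos)
  qed (auto intro!: derivative_eq_intros simp: algebra_simps power2_eq_square)
  then show ?thesis unfolding z_def .
qed

lemma flh_likelihood_mixture_le:
  assumes "1 \<le> t" "\<bar>y t\<bar> \<le> G" "0 \<le> B" "- B \<le> x0" "x0 \<le> B" "0 < G + B"
  shows "(\<Sum>j=1..t. flh_v B G x0 y t j * flh_likelihood B G x0 y t j)
     \<le> exp (- (1 / (2 * (G + B)\<^sup>2)) * (y t - flh_ogd_pred B G x0 y t)\<^sup>2)"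
  using concave_on_sum[OF _ _ concave_on_exp_square_loss[OF assms(2,6)], of "{1..t}"
      "flh_v B G x0 y t" "\<lambda>j. ogd_pred B x0 y j t"]
    flh_v_sum[OF assms(1)] flh_v_pos ogd_pred_bounds[OF assms(3-5)] assms(1)
  by (auto simp: flh_likelihood_def flh_ogd_pred_def less_imp_le)

lemma flh_v_Suc_Suc_ge:
  assumes "1 \<le> r" "r \<le> Suc s" "\<bar>y (Suc s)\<bar> \<le> G" "0 \<le> B" "- B \<le> x0" "x0 \<le> B" "0 < G + B"
  shows "real (Suc s) / real (Suc (Suc s)) * flh_v B G x0 y (Suc s) r
      * exp (1 / (2 * (G + B)\<^sup>2) * ((y (Suc s) - flh_ogd_pred B G x0 y (Suc s))\<^sup>2
                                     - (y (Suc s) - ogd_pred B x0 y r (Suc s))\<^sup>2))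
     \<le> flh_v B G x0 y (Suc (Suc s)) r"
proof -
  let ?v = "flh_v B G x0 y (Suc s)" and ?L = "flh_likelihood B G x0 y (Suc s)"
  let ?Z = "\<Sum>j=1..Suc s. ?v j * ?L j" and ?z = "1 / (2 * (G + B)\<^sup>2)"
  let ?E = "exp (- ?z * (y (Suc s) - flh_ogd_pred B G x0 y (Suc s))\<^sup>2)"
  have L_pos: "0 < ?L i" for i by (simp add: flh_likelihood_def)
  have Z_pos: "0 < ?Z" using flh_v_pos L_pos by (intro sum_pos) auto
  have "?L r / ?E = exp (?z * ((y (Suc s) - flh_ogd_pred B G x0 y (Suc s))\<^sup>2
                                - (y (Suc s) - ogd_pred B x0 y r (Suc s))\<^sup>2))"
    by (simp add: flh_likelihood_def exp_diff[symmetric] algebra_simps)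
  moreover have "real (Suc s) / real (Suc (Suc s)) = 1 - 1 / real (Suc (Suc s))"
    by (simp add: field_simps)
  ultimately have "real (Suc s) / real (Suc (Suc s)) * ?v r
      * exp (?z * ((y (Suc s) - flh_ogd_pred B G x0 y (Suc s))\<^sup>2 - (y (Suc s) - ogd_pred B x0 y r (Suc s))\<^sup>2))
      = (1 - 1 / real (Suc (Suc s))) * (?v r * (?L r / ?E))"
    by (simp only: mult.assoc)
  also have "\<dots> \<le> (1 - 1 / real (Suc (Suc s))) * (?v r * (?L r / ?Z))"
    using flh_likelihood_mixture_le[of "Suc s" y G B x0] assms Z_pos L_pos[of r] flh_v_pos[OF assms(1,2), THEN less_imp_le]
    by (intro mult_left_mono divide_left_mono) auto
  also have "\<dots> = flh_v B G x0 y (Suc (Suc s)) r"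
    using assms(1,2) by (simp add: flh_v_Suc_Suc del: flh_v.simps)
  finally show ?thesis .
qed

lemma flh_v_ge_exp_regret:
  assumes "1 \<le> r" "r \<le> Suc s" "\<forall>t\<in>{1..s}. \<bar>y t\<bar> \<le> G" "0 \<le> B" "- B \<le> x0" "x0 \<le> B" "0 < G + B"
  shows "exp (1 / (2 * (G + B)\<^sup>2) * (\<Sum>t=r..s. (y t - flh_ogd_pred B G x0 y t)\<^sup>2
            - (y t - ogd_pred B x0 y r t)\<^sup>2)) / real (Suc s)
     \<le> flh_v B G x0 y (Suc s) r"
  using assms(2,3)
proof (induction s)
  case 0
  then have "r = 1" using assms(1) by simp
  then show ?case by simp
next
  case (Suc s)
  let ?z = "1 / (2 * (G + B)\<^sup>2)"
  let ?d = "\<lambda>t. (y t - flh_ogd_pred B G x0 y t)\<^sup>2 - (y t - ogd_pred B x0 y r t)\<^sup>2"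
  show ?case
  proof (cases "r = Suc (Suc s)")
    case False
    then have r: "r \<le> Suc s" using Suc.prems by simp
    have "exp (?z * sum ?d {r..Suc s}) = exp (?z * sum ?d {r..s}) * exp (?z * ?d (Suc s))"
      using r by (simp add: distrib_left exp_add)
    moreover have "a * b / real (Suc (Suc s)) = real (Suc s) / real (Suc (Suc s)) * (a / real (Suc s)) * b"
      for a b by (simp add: field_simps del: of_nat_Suc)
    ultimately have "exp (?z * sum ?d {r..Suc s}) / real (Suc (Suc s))
        = real (Suc s) / real (Suc (Suc s)) * (exp (?z * sum ?d {r..s}) / real (Suc s)) * exp (?z * ?d (Suc s))"
      by simp
    also have "\<dots> \<le> real (Suc s) / real (Suc (Suc s)) * flh_v B G x0 y (Suc s) r * exp (?z * ?d (Suc s))"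
      using Suc r by (intro mult_right_mono mult_left_mono) auto
    also have "\<dots> \<le> flh_v B G x0 y (Suc (Suc s)) r"
      by (rule flh_v_Suc_Suc_ge) (use assms Suc.prems r in auto)
    finally show ?thesis .
  qed (simp add: Let_def)
qed

lemma flh_regret_vs_expert:
  assumes "1 \<le> r" "r \<le> s" "\<forall>t\<in>{1..s}. \<bar>y t\<bar> \<le> G" "0 \<le> B" "- B \<le> x0" "x0 \<le> B" "0 < G + B"
  shows "(\<Sum>t=r..s. (y t - flh_ogd_pred B G x0 y t)\<^sup>2 - (y t - ogd_pred B x0 y r t)\<^sup>2)
     \<le> 2 * (G + B)\<^sup>2 * ln (real s + 1)"
proof -
  define S where "S = (\<Sum>t=r..s. (y t - flh_ogd_pred B G x0 y t)\<^sup>2 - (y t - ogd_pred B x0 y r t)\<^sup>2)"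
  have "exp (S / (2 * (G + B)\<^sup>2)) / real (Suc s) \<le> flh_v B G x0 y (Suc s) r"
    using flh_v_ge_exp_regret[of r s y G B x0] assms unfolding S_def by simp
  also have "\<dots> \<le> (\<Sum>i=1..Suc s. flh_v B G x0 y (Suc s) i)"
    by (rule member_le_sum) (use assms flh_v_pos in \<open>auto simp: less_imp_le\<close>)
  also have "\<dots> = 1" by (rule flh_v_sum) simp
  finally have "S / (2 * (G + B)\<^sup>2) \<le> ln (real s + 1)"
    by (simp add: ln_ge_iff field_simps)
  then show ?thesis unfolding S_def using assms(7) by (simp add: field_simps)
qed

lemma one_le_ln: "3 \<le> n \<Longrightarrow> 1 \<le> ln (real n)"
proof -
  assume "3 \<le> n"
  then have "ln 3 \<le> ln (real n)" by simp
  then show ?thesis using ln3_gt_1 by linarith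
qed

lemma flh_ogd_interval_regret:
  assumes "1 \<le> a" "a \<le> b" "b \<le> n" "3 \<le> n" and y_bounded: "\<forall>t\<in>{1..n}. \<bar>y t\<bar> \<le> G"
    and B: "0 \<le> B" "- B \<le> x0" "x0 \<le> B" "0 < G + B" and w: "- B \<le> w" "w \<le> B"
  shows "(\<Sum>t=a..b. (y t - flh_ogd_pred B G x0 y t)\<^sup>2) \<le> (\<Sum>t=a..b. (y t - w)\<^sup>2) + 6 * (G + B)\<^sup>2 * ln (real n)"
proof -
  have ln_n: "1 \<le> ln (real n)" using assms(4) by (rule one_le_ln)
  have "ln (real b + 1) \<le> ln (2 * real n)" using assms(2-4) by simp
  also have "\<dots> \<le> 2 * ln (real n)" using assms(4) by (simp add: ln_mult)
  finally have "ln (real b + 1) \<le> 2 * ln (real n)" .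
  moreover have "ln (real (b - a + 1)) \<le> ln (real n)" using assms(1-3) by simp
  moreover have "(\<Sum>t=a..b. (y t - flh_ogd_pred B G x0 y t)\<^sup>2 - (y t - ogd_pred B x0 y a t)\<^sup>2)
     \<le> 2 * (G + B)\<^sup>2 * ln (real b + 1)"
    by (rule flh_regret_vs_expert) (use assms in auto)
  moreover have "(\<Sum>t=a..b. (y t - ogd_pred B x0 y a t)\<^sup>2 - (y t - w)\<^sup>2)
     \<le> (G + B)\<^sup>2 * (1 + ln (real (b - a + 1)))"
    by (rule ogd_interval_regret) (use assms in auto)
  ultimately have "(\<Sum>t=a..b. (y t - flh_ogd_pred B G x0 y t)\<^sup>2 - (y t - ogd_pred B x0 y a t)\<^sup>2)
      + (\<Sum>t=a..b. (y t - ogd_pred B x0 y a t)\<^sup>2 - (y t - w)\<^sup>2)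
      \<le> 2 * (G + B)\<^sup>2 * (2 * ln (real n)) + (G + B)\<^sup>2 * (ln (real n) + ln (real n))"
    using ln_n by (smt (verit) mult_left_mono zero_le_power2)
  then show ?thesis by (simp add: sum_subtractf algebra_simps)
qed

lemma flh_ogd_regret_le_trivial:
  assumes "\<forall>t\<in>{1..n}. \<bar>y t\<bar> \<le> G" "0 \<le> B" "- B \<le> x0" "x0 \<le> B"
  shows "(\<Sum>t=1..n. (y t - flh_ogd_pred B G x0 y t)\<^sup>2 - (y t - u t)\<^sup>2) \<le> real n * (G + B)\<^sup>2"
proof -
  have "(\<Sum>t=1..n. (y t - flh_ogd_pred B G x0 y t)\<^sup>2 - (y t - u t)\<^sup>2) \<le> (\<Sum>t=1..n. (G + B)\<^sup>2)"
  proof (rule sum_mono)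
    fix t assume "t \<in> {1..n}"
    then have "(y t - flh_ogd_pred B G x0 y t)\<^sup>2 \<le> (G + B)\<^sup>2"
      using assms flh_ogd_pred_bounds[OF assms(2-4)] by (intro square_loss_le) auto
    then show "(y t - flh_ogd_pred B G x0 y t)\<^sup>2 - (y t - u t)\<^sup>2 \<le> (G + B)\<^sup>2"
      by (smt (verit) zero_le_power2)
  qed
  then show ?thesis by simp
qed

section \<open>Regret against a KKT point of the offline problem\<close>

lemma sum_split_at:
  fixes f :: "nat \<Rightarrow> 'a::comm_monoid_add"
  assumes "a \<le> Suc b" "b \<le> c"
  shows "sum f {a..c} = sum f {a..b} + sum f {Suc b..c}"
  using sum.ub_add_nat[of a b f "c - b"] assms by simp

text \<open>\<open>X\<close> is any forecaster with regret at most \<open>R\<close> on every interval against every constant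
  comparator; the last two assumptions say \<open>l0 margin\<^sup>2 \<le> K\<close> and \<open>margin \<le> B/2\<close>.\<close>
locale kkt_comparator =
  fixes n :: nat and B lam R l0 V0 :: real and y u X s gm gp :: "nat \<Rightarrow> real"
  assumes B_pos: "0 < B"
    and u_bounds: "\<forall>t\<in>{1..n}. - B \<le> u t \<and> u t \<le> B"
    and s_sgn: "\<forall>t\<in>{1..<n}. u (t + 1) \<noteq> u t \<longrightarrow> s t = sgn (u (t + 1) - u t)"
    and stationarity: "\<forall>t\<in>{1..n}. u t - y t = lam * (s t - s (t - 1)) + gm t - gp t"
    and slackness: "\<forall>t\<in>{1..n}. gm t * (u t + B) = 0 \<and> gp t * (u t - B) = 0"
    and adaptive_regret: "\<And>a b w. 1 \<le> a \<Longrightarrow> a \<le> b \<Longrightarrow> b \<le> n \<Longrightarrow> - B \<le> w \<Longrightarrow> w \<le> B \<Longrightarrow>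
        (\<Sum>t=a..b. (y t - X t)\<^sup>2) \<le> (\<Sum>t=a..b. (y t - w)\<^sup>2) + R"
    and R_nonneg: "0 \<le> R" and lam_pos: "0 < lam"
    and l0_pos: "0 < l0" and V0_pos: "0 < V0" and l0_V0: "l0 * V0\<^sup>2 \<le> 1"
    and l0_margin: "l0 * ((4 * R + 4) / (2 * lam))\<^sup>2 \<le> 4 * R + 4"
    and margin_le: "(4 * R + 4) / (2 * lam) \<le> B / 2"
begin

definition "K = 4 * R + 4"
definition "P = 2 * R + 2"
definition "margin = K / (2 * lam)"
definition "tv i j = (\<Sum>t\<in>{i<..j}. \<bar>u t - u (t - 1)\<bar>)"
definition "change_point m \<longleftrightarrow> 1 \<le> m \<and> m < n \<and> u (Suc m) \<noteq> u m"
definition "regret t = (y t - X t)\<^sup>2 - (y t - u t)\<^sup>2"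
definition "potential a p k =
  (K / l0) * real (a - 1) + (K / V0) * tv 1 a + (P / B) * tv 1 p + P * \<bar>k\<bar> + R"

text \<open>The state at a change point \<open>m\<close>: \<open>[a, m]\<close> is the open bin, on which both residual
  sums vanish; \<open>p\<close> is the change point at which a bin was last closed, and \<open>k = \<plusminus>1\<close> records
  that \<open>u\<close> was then within \<open>margin\<close> of \<open>\<plusminus>B\<close> and moving away from it (\<open>k = 0\<close>: no such debt).\<close>
definition "invariant m a p k \<longleftrightarrow> change_point m \<and> 1 \<le> a \<and> a \<le> Suc m \<and> 1 \<le> p \<and> p < a \<and>
  real (Suc m - a) < l0 \<and> tv a m < V0 \<and>
  (\<Sum>t=a..m. y t - u t) = 0 \<and> (\<Sum>t=a..m. u t * (y t - u t)) = 0 \<and>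
  (\<Sum>t=1..a-1. regret t) \<le> potential a p k \<and> k \<in> {-1, 0, 1} \<and>
  (k \<noteq> 0 \<longrightarrow> B - margin < k * u p \<and> k * (u (Suc m) - u m) < 0)"

lemma K_pos: "0 < K"
  unfolding K_def using R_nonneg by simp

lemma margin_pos: "0 < margin"
  unfolding margin_def using K_pos lam_pos by simp

lemma K_ge: "2 * R + 1 + P \<le> K"
  unfolding K_def P_def by simp

lemma P_pos: "0 < P"
  unfolding P_def using R_nonneg by simp

lemma P_ge: "2 * R + 1 \<le> P"
  unfolding P_def by simp

lemma margin_le_half_B: "margin \<le> B / 2"
  using margin_le unfolding margin_def K_def .

lemma l0_margin_le_K: "l0 * margin\<^sup>2 \<le> K"
  using l0_margin unfolding margin_def K_def .

lemma margin_lam: "2 * margin * (2 * lam) = 2 * K"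
  unfolding margin_def using lam_pos by simp

lemma tv_nonneg: "0 \<le> tv i j"
  unfolding tv_def by (simp add: sum_nonneg)

lemma tv_empty: "j \<le> i \<Longrightarrow> tv i j = 0"
  unfolding tv_def by simp

lemma tv_split: "i \<le> j \<Longrightarrow> j \<le> k \<Longrightarrow> tv i k = tv i j + tv j k"
proof -
  assume "i \<le> j" "j \<le> k"
  then have "{i<..k} = {i<..j} \<union> {j<..k}" by auto
  then show ?thesis unfolding tv_def by (simp add: sum.union_disjoint ivl_disj_int)
qed

lemma tv_mono: "i \<le> j \<Longrightarrow> j \<le> k \<Longrightarrow> tv i j \<le> tv i k"
  using tv_split[of i j k] tv_nonneg[of j k] by simp

lemma abs_diff_le_tv: "i \<le> j \<Longrightarrow> \<bar>u j - u i\<bar> \<le> tv i j"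
proof (induction j rule: dec_induct)
  case (step j)
  have "tv j (Suc j) = \<bar>u (Suc j) - u j\<bar>"
    unfolding tv_def by (simp add: atLeastSucAtMost_greaterThanAtMost[symmetric])
  then show ?case using step tv_split[of i j "Suc j"] by simp
qed (simp add: tv_empty)

lemma u_eq_if_no_change_point:
  assumes "1 \<le> j" "j \<le> m" "m \<le> n" "\<And>t. j \<le> t \<Longrightarrow> t < m \<Longrightarrow> \<not> change_point t"
  shows "u j = u m"
  using assms(2)
proof (induction rule: dec_induct)
  case (step q)
  then show ?case using assms(1,3) assms(4)[of q] unfolding change_point_def by simp
qed simp

lemma s_at_change_point: "change_point m \<Longrightarrow> s m = sgn (u (Suc m) - u m)"
  using s_sgn unfolding change_point_def by auto

lemma u_bound: "1 \<le> t \<Longrightarrow> t \<le> n \<Longrightarrow> - B \<le> u t \<and> u t \<le> B"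
  using u_bounds by simp

lemma regret_le_constant:
  assumes "1 \<le> a" "a \<le> Suc b" "b \<le> n" "- B \<le> w" "w \<le> B"
  shows "(\<Sum>t=a..b. regret t) \<le> R + (\<Sum>t=a..b. (y t - w)\<^sup>2 - (y t - u t)\<^sup>2)"
proof (cases "a \<le> b")
  case True
  then have "(\<Sum>t=a..b. (y t - X t)\<^sup>2) \<le> (\<Sum>t=a..b. (y t - w)\<^sup>2) + R"
    using assms by (intro adaptive_regret) auto
  then show ?thesis unfolding regret_def by (simp add: sum_subtractf)
next
  case False
  then show ?thesis using R_nonneg by simp
qed

lemma regret_constant_piece:
  assumes "1 \<le> a" "a \<le> Suc b" "b \<le> n" "\<forall>t\<in>{a..b}. u t = v" "- B \<le> v" "v \<le> B"
  shows "(\<Sum>t=a..b. regret t) \<le> R"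
proof -
  have "(\<Sum>t=a..b. regret t) \<le> R + (\<Sum>t=a..b. (y t - v)\<^sup>2 - (y t - u t)\<^sup>2)"
    using assms(1-3,5,6) by (rule regret_le_constant)
  also have "(\<Sum>t=a..b. (y t - v)\<^sup>2 - (y t - u t)\<^sup>2) = 0"
    using assms(4) by simp
  finally show ?thesis by simp
qed

text \<open>Compare with the constant \<open>u a\<close>: the two vanishing sums turn the excess loss into
  \<open>\<Sum>(u t - u a)\<^sup>2\<close>, which is at most \<open>l0 V0\<^sup>2 \<le> 1\<close>.\<close>
lemma regret_balanced_bin:
  assumes "1 \<le> a" "a \<le> Suc b" "b \<le> n"
    and residual: "(\<Sum>t=a..b. y t - u t) = 0" and weighted: "(\<Sum>t=a..b. u t * (y t - u t)) = 0"
    and short: "real (Suc b - a) < l0" and small: "tv a b < V0"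
  shows "(\<Sum>t=a..b. regret t) \<le> R + 1"
proof (cases "a \<le> b")
  case True
  have "(\<Sum>t=a..b. regret t) \<le> R + (\<Sum>t=a..b. (y t - u a)\<^sup>2 - (y t - u t)\<^sup>2)"
    using assms True u_bound[of a] by (intro regret_le_constant) auto
  also have "(\<Sum>t=a..b. (y t - u a)\<^sup>2 - (y t - u t)\<^sup>2)
      = (\<Sum>t=a..b. (u t - u a)\<^sup>2 + 2 * (u t * (y t - u t)) - 2 * u a * (y t - u t))"
    by (rule sum.cong) (simp_all add: power2_eq_square algebra_simps)
  also have "\<dots> = (\<Sum>t=a..b. (u t - u a)\<^sup>2)"
    using residual weighted by (simp add: sum.distrib sum_subtractf sum_distrib_left[symmetric])
  also have "\<dots> \<le> (\<Sum>t=a..b. (tv a b)\<^sup>2)"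
  proof (rule sum_mono)
    fix t assume "t \<in> {a..b}"
    then have "\<bar>u t - u a\<bar> \<le> tv a b"
      using abs_diff_le_tv[of a t] tv_mono[of a t b] by simp
    then show "(u t - u a)\<^sup>2 \<le> (tv a b)\<^sup>2" by (rule square_le_square_if_abs_le)
  qed
  also have "\<dots> = real (Suc b - a) * (tv a b)\<^sup>2" by simp
  also have "\<dots> \<le> l0 * V0\<^sup>2"
    using short small tv_nonneg[of a b] by (intro mult_mono power_mono) auto
  finally show ?thesis using l0_V0 by simp
next
  case False
  then show ?thesis using R_nonneg by simp
qed

text \<open>On a piece where \<open>u\<close> is constant and strictly inside the box, both dual variables of
  the box vanish and the stationarity condition telescopes.\<close>
lemma residual_sum_piece:
  assumes "change_point m0" "change_point m" "m0 < m" "\<forall>t\<in>{Suc m0..m}. u t = v"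
    and "- B < v" "v < B"
  shows "(\<Sum>t=Suc m0..m. y t - u t) = lam * (s m0 - s m)"
proof -
  have "(\<Sum>t=Suc m0..m. u t - y t) = (\<Sum>t=Suc m0..m. lam * (s t - s (t - 1)))"
  proof (rule sum.cong)
    fix t assume t: "t \<in> {Suc m0..m}"
    then have t1: "t \<in> {1..n}" using assms(1,2) unfolding change_point_def by auto
    have "gm t = 0" "gp t = 0" using slackness t1 assms(4-6) t by auto
    then show "u t - y t = lam * (s t - s (t - 1))" using stationarity t1 by auto
  qed simp
  also have "\<dots> = lam * (s m - s m0)"
    using assms(3) sum_telescope''[of m0 m s] by (simp add: sum_distrib_left[symmetric])
  finally show ?thesis by (simp add: sum_subtractf algebra_simps)
qed

lemma full_bin_credit:
  assumes "l0 \<le> real (Suc m - a) \<or> V0 \<le> tv a (Suc m)"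
  shows "K \<le> (K / l0) * real (Suc m - a) + (K / V0) * tv a (Suc m)"
proof -
  have "0 \<le> (K / l0) * real (Suc m - a)" "0 \<le> (K / V0) * tv a (Suc m)"
    using K_pos l0_pos V0_pos tv_nonneg by auto
  moreover have "K \<le> (K / l0) * real (Suc m - a) \<or> K \<le> (K / V0) * tv a (Suc m)"
    using assms K_pos l0_pos V0_pos by (auto simp: field_simps)
  ultimately show ?thesis by linarith
qed

lemma close_bin:
  assumes inv: "invariant m0 a p k" and "change_point m" "m0 < m"
    and piece: "(\<Sum>t=Suc m0..m. regret t) \<le> R + Q"
    and "p \<le> p'" "p' \<le> m" "k' \<in> {-1, 0, 1}"
    and credit: "Q + 2 * R + 1 + P * \<bar>k\<bar>
      \<le> (K / l0) * real (Suc m - a) + (K / V0) * tv a (Suc m) + (P / B) * tv p p' + P * \<bar>k'\<bar>"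
    and tag: "k' \<noteq> 0 \<longrightarrow> B - margin < k' * u p' \<and> k' * (u (Suc m) - u m) < 0"
  shows "invariant m (Suc m) p' k'"
proof -
  have a: "1 \<le> a" "a \<le> Suc m0" "1 \<le> p" "p < a"
    and open_bin: "(\<Sum>t=a..m0. y t - u t) = 0" "(\<Sum>t=a..m0. u t * (y t - u t)) = 0"
      "real (Suc m0 - a) < l0" "tv a m0 < V0"
    and past: "(\<Sum>t=1..a-1. regret t) \<le> potential a p k" and "change_point m0"
    using inv unfolding invariant_def by auto
  then have "m0 \<le> n" unfolding change_point_def by simp
  have "(\<Sum>t=1..m. regret t) = (\<Sum>t=1..a-1. regret t) + (\<Sum>t=a..m0. regret t) + (\<Sum>t=Suc m0..m. regret t)"
    using a \<open>m0 < m\<close> sum_split_at[of 1 "a - 1" m regret] sum_split_at[of a m0 m regret] by simp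
  also have "\<dots> \<le> potential a p k + (R + 1) + (R + Q)"
    using past regret_balanced_bin[OF a(1,2) \<open>m0 \<le> n\<close> open_bin] piece by linarith
  also have "\<dots> \<le> potential (Suc m) p' k'"
  proof -
    have "tv 1 (Suc m) = tv 1 a + tv a (Suc m)" "tv 1 p' = tv 1 p + tv p p'"
      using a assms(3,5) tv_split[of 1 a "Suc m"] tv_split[of 1 p p'] by simp_all
    moreover have "real (Suc m - 1) = real (a - 1) + real (Suc m - a)" using a assms(3) by simp
    ultimately show ?thesis
      unfolding potential_def using credit by (simp only: distrib_left)
  qed
  finally have "(\<Sum>t=1..Suc m - 1. regret t) \<le> potential (Suc m) p' k'" by simp
  moreover have "1 \<le> p'" "p' < Suc m" using a assms(5,6) by auto
  ultimately show ?thesis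
    unfolding invariant_def using assms(2,7) tag l0_pos V0_pos tv_empty[of m "Suc m"]
    by (intro conjI) simp_all
qed

lemma monotone_piece_balanced:
  assumes cp0: "change_point m0" and cp: "change_point m" and "m0 < m"
    and const: "\<forall>t\<in>{Suc m0..m}. u t = v"
    and monotone: "(u m0 < v \<and> v < u (Suc m)) \<or> (v < u m0 \<and> u (Suc m) < v)"
  shows "(\<Sum>t=Suc m0..m. y t - u t) = 0" "(\<Sum>t=Suc m0..m. u t * (y t - u t)) = 0"
proof -
  have "1 \<le> m0" "m < n" using cp0 cp unfolding change_point_def by auto
  then have interior: "- B < v" "v < B"
    using monotone u_bound[of m0] u_bound[of "Suc m"] \<open>m0 < m\<close> by auto
  have "u (Suc m0) = v" "u m = v" using const \<open>m0 < m\<close> by auto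
  then have "s m0 = s m"
    using monotone s_at_change_point[OF cp0] s_at_change_point[OF cp] by (auto simp: sgn_if)
  then show residual: "(\<Sum>t=Suc m0..m. y t - u t) = 0"
    using residual_sum_piece[OF cp0 cp \<open>m0 < m\<close> const interior] by simp
  have "(\<Sum>t=Suc m0..m. u t * (y t - u t)) = v * (\<Sum>t=Suc m0..m. y t - u t)"
    using const by (simp add: sum_distrib_left)
  then show "(\<Sum>t=Suc m0..m. u t * (y t - u t)) = 0"
    using residual by simp
qed

lemma invariant_step_monotone:
  assumes inv: "invariant m0 a p k" and cp: "change_point m" and "m0 < m"
    and const: "\<forall>t\<in>{Suc m0..m}. u t = v"
    and monotone: "(u m0 < v \<and> v < u (Suc m)) \<or> (v < u m0 \<and> u (Suc m) < v)"
  shows "\<exists>a' p' k'. invariant m a' p' k'"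
proof -
  have a: "1 \<le> a" "a \<le> Suc m0" "1 \<le> p" "p < a" and cp0: "change_point m0"
    and open_bin: "(\<Sum>t=a..m0. y t - u t) = 0" "(\<Sum>t=a..m0. u t * (y t - u t)) = 0"
    and past: "(\<Sum>t=1..a-1. regret t) \<le> potential a p k" and k: "k \<in> {-1, 0, 1}"
    and tag: "k \<noteq> 0 \<longrightarrow> B - margin < k * u p \<and> k * (u (Suc m0) - u m0) < 0"
    using inv unfolding invariant_def by auto
  have "m < n" using cp unfolding change_point_def by simp
  have "u (Suc m0) = v" "u m = v" using const \<open>m0 < m\<close> by auto
  then have same_direction: "k * (u (Suc m) - u m) < 0 \<longleftrightarrow> k * (u (Suc m0) - u m0) < 0"
    using monotone by (auto simp: mult_less_0_iff)
  note piece = monotone_piece_balanced[OF cp0 cp \<open>m0 < m\<close> const monotone]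
  show ?thesis
  proof (cases "real (Suc m - a) < l0 \<and> tv a m < V0")
    case True
    have "(\<Sum>t=a..m. y t - u t) = 0" "(\<Sum>t=a..m. u t * (y t - u t)) = 0"
      using a \<open>m0 < m\<close> open_bin piece sum_split_at[of a m0 m "\<lambda>t. y t - u t"]
        sum_split_at[of a m0 m "\<lambda>t. u t * (y t - u t)"] by simp_all
    then have "invariant m a p k"
      unfolding invariant_def using cp a \<open>m0 < m\<close> True past k tag same_direction by auto
    then show ?thesis by blast
  next
    case False
    have "- B \<le> v" "v \<le> B" using u_bound[of m] \<open>m0 < m\<close> \<open>m < n\<close> \<open>u m = v\<close> by auto
    then have constant_piece: "(\<Sum>t=Suc m0..m. regret t) \<le> R + 0"
      using regret_constant_piece[OF _ _ _ const] \<open>m0 < m\<close> \<open>m < n\<close> by simp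
    from False have "l0 \<le> real (Suc m - a) \<or> V0 \<le> tv a (Suc m)"
      using tv_mono[of a m "Suc m"] a \<open>m0 < m\<close> by auto
    then have "K \<le> (K / l0) * real (Suc m - a) + (K / V0) * tv a (Suc m)"
      by (rule full_bin_credit)
    then have "invariant m (Suc m) p k"
      using a \<open>m0 < m\<close> k tag same_direction K_ge P_pos
      by (intro close_bin[OF inv cp \<open>m0 < m\<close> constant_piece]) (auto simp: tv_empty)
    then show ?thesis by blast
  qed
qed

text \<open>At a local maximum \<open>v\<close> of \<open>u\<close> we have \<open>s m0 = 1\<close> and \<open>s m = -1\<close>, so the residuals
  on the piece sum to \<open>2 lam\<close>, and the comparator \<open>v + margin\<close> beats \<open>u\<close> by \<open>2K\<close> minus the
  length of the piece times \<open>margin\<^sup>2\<close>.\<close>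
lemma regret_inner_peak:
  assumes cp0: "change_point m0" and cp: "change_point m" and "m0 < m"
    and const: "\<forall>t\<in>{Suc m0..m}. u t = v" and peak: "u m0 < v" "u (Suc m) < v"
    and short: "real (m - m0) < l0" and inner: "v \<le> B - margin"
  shows "(\<Sum>t=Suc m0..m. regret t) \<le> R + - K"
proof -
  have "1 \<le> m0" "m < n" using cp0 cp unfolding change_point_def by auto
  have u_m: "u (Suc m0) = v" "u m = v" using const \<open>m0 < m\<close> by auto
  have "- B < v" using peak u_bound[of m0] \<open>1 \<le> m0\<close> \<open>m0 < m\<close> \<open>m < n\<close> by auto
  have "s m0 = 1" "s m = -1"
    using s_at_change_point[OF cp0] s_at_change_point[OF cp] peak u_m by auto
  then have piece_residual: "(\<Sum>t=Suc m0..m. y t - u t) = 2 * lam"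
    using residual_sum_piece[OF cp0 cp \<open>m0 < m\<close> const] \<open>- B < v\<close> inner margin_pos by simp
  have "(\<Sum>t=Suc m0..m. (y t - (v + margin))\<^sup>2 - (y t - u t)\<^sup>2)
      = (\<Sum>t=Suc m0..m. margin\<^sup>2 - 2 * margin * (y t - u t))"
    using const by (intro sum.cong) (auto simp: power2_eq_square algebra_simps)
  also have "\<dots> = real (m - m0) * margin\<^sup>2 - 2 * K"
    using piece_residual margin_lam by (simp add: sum_subtractf sum_distrib_left[symmetric])
  also have "\<dots> \<le> - K"
    using l0_margin_le_K mult_right_mono[of "real (m - m0)" l0 "margin\<^sup>2"] short by simp
  finally show ?thesis
    using regret_le_constant[of "Suc m0" m "v + margin"] inner \<open>- B < v\<close> margin_pos \<open>m0 < m\<close> \<open>m < n\<close>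
    by simp
qed

lemma invariant_step_peak:
  assumes inv: "invariant m0 a p k" and cp: "change_point m" and "m0 < m"
    and const: "\<forall>t\<in>{Suc m0..m}. u t = v" and peak: "u m0 < v" "u (Suc m) < v"
  shows "\<exists>a' p' k'. invariant m a' p' k'"
proof -
  have a: "1 \<le> a" "a \<le> Suc m0" "p < a" and cp0: "change_point m0" and k: "k \<in> {-1, 0, 1}"
    and tag: "k \<noteq> 0 \<longrightarrow> B - margin < k * u p \<and> k * (u (Suc m0) - u m0) < 0"
    using inv unfolding invariant_def by auto
  have "1 \<le> m0" "m < n" using cp0 cp unfolding change_point_def by auto
  have u_m: "u (Suc m0) = v" "u m = v" using const \<open>m0 < m\<close> by auto
  have v_bounds: "- B < v" "v \<le> B"
    using peak u_bound[of m0] u_bound[of m] \<open>1 \<le> m0\<close> \<open>m0 < m\<close> \<open>m < n\<close> u_m by auto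
  have k_cases: "k = 0 \<or> k = -1" using k tag peak u_m by auto
  then have debt_le: "P * \<bar>k\<bar> \<le> P" using P_pos by auto
  have "p \<le> m" using a \<open>m0 < m\<close> by simp
  have nonneg: "0 \<le> (K / l0) * real (Suc m - a)" "0 \<le> (K / V0) * tv a (Suc m)" "0 \<le> (P / B) * tv p m"
    using K_pos l0_pos V0_pos B_pos P_pos tv_nonneg by auto
  have constant_piece: "(\<Sum>t=Suc m0..m. regret t) \<le> R + 0"
    using regret_constant_piece[OF _ _ _ const] v_bounds \<open>m0 < m\<close> \<open>m < n\<close> by simp
  consider (long) "l0 \<le> real (m - m0)" | (top) "real (m - m0) < l0" "B - margin < v"
    | (inner) "real (m - m0) < l0" "v \<le> B - margin"
    by linarith
  then have "\<exists>k'. invariant m (Suc m) m k'"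
  proof cases
    case long
    then have "K \<le> (K / l0) * real (Suc m - a) + (K / V0) * tv a (Suc m)"
      using a by (intro full_bin_credit) auto
    then have "invariant m (Suc m) m 0"
      using K_ge debt_le nonneg \<open>p \<le> m\<close>
      by (intro close_bin[OF inv cp \<open>m0 < m\<close> constant_piece]) auto
    then show ?thesis by blast
  next
    case top
    have "P * \<bar>k\<bar> \<le> (P / B) * tv p m"
    proof (cases "k = 0")
      case False
      then have "u p < margin - B" using k_cases tag by auto
      then have "B \<le> tv p m"
        using top margin_le_half_B abs_diff_le_tv[OF \<open>p \<le> m\<close>] u_m by auto
      then have "(P / B) * B \<le> (P / B) * tv p m"
        using P_pos B_pos by (intro mult_left_mono) auto
      then show ?thesis using k_cases False B_pos by auto
    qed (use nonneg in simp)
    then have "invariant m (Suc m) m 1"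
      using top peak u_m nonneg P_ge \<open>p \<le> m\<close>
      by (intro close_bin[OF inv cp \<open>m0 < m\<close> constant_piece]) auto
    then show ?thesis by blast
  next
    case inner
    note piece = regret_inner_peak[OF cp0 cp \<open>m0 < m\<close> const peak inner]
    have "invariant m (Suc m) m 0"
      using K_ge debt_le nonneg \<open>p \<le> m\<close> by (intro close_bin[OF inv cp \<open>m0 < m\<close> piece]) auto
    then show ?thesis by blast
  qed
  then show ?thesis by blast
qed

text \<open>Negating \<open>y\<close>, \<open>u\<close>, \<open>X\<close> and \<open>s\<close> and swapping the two box multipliers preserves all
  hypotheses; it turns a local minimum of \<open>u\<close> into a local maximum.\<close>
lemma mirror_kkt_comparator:
  "kkt_comparator n B lam R l0 V0 (\<lambda>t. - y t) (\<lambda>t. - u t) (\<lambda>t. - X t) (\<lambda>t. - s t) gp gm"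
proof unfold_locales
  fix a b w assume "1 \<le> a" "a \<le> b" "b \<le> n" "- B \<le> w" "w \<le> B"
  then have "(\<Sum>t=a..b. (y t - X t)\<^sup>2) \<le> (\<Sum>t=a..b. (y t - - w)\<^sup>2) + R"
    by (intro adaptive_regret) auto
  moreover have "(- a - - b)\<^sup>2 = (a - b)\<^sup>2" "(- a - w)\<^sup>2 = (a - - w)\<^sup>2" for a b :: real
    by algebra+
  ultimately show "(\<Sum>t=a..b. (- y t - - X t)\<^sup>2) \<le> (\<Sum>t=a..b. (- y t - w)\<^sup>2) + R"
    by (simp only:)
qed (use B_pos u_bounds s_sgn stationarity slackness R_nonneg lam_pos l0_pos V0_pos l0_V0 l0_margin
    margin_le in \<open>auto simp: sgn_if algebra_simps\<close>)

lemma invariant_step_valley: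
  assumes inv: "invariant m0 a p k" and cp: "change_point m" and "m0 < m"
    and const: "\<forall>t\<in>{Suc m0..m}. u t = v" and valley: "v < u m0" "v < u (Suc m)"
  shows "\<exists>a' p' k'. invariant m a' p' k'"
proof -
  interpret mirror: kkt_comparator n B lam R l0 V0 "\<lambda>t. - y t" "\<lambda>t. - u t" "\<lambda>t. - X t" "\<lambda>t. - s t" gp gm
    by (rule mirror_kkt_comparator)
  have mirror_tv: "mirror.tv i j = tv i j" for i j
    unfolding mirror.tv_def tv_def by (simp add: abs_minus_commute)
  have mirror_change_point: "mirror.change_point m = change_point m" for m
    unfolding mirror.change_point_def change_point_def by simp
  have mirror_regret: "mirror.regret t = regret t" for t
    unfolding mirror.regret_def regret_def by (simp add: power2_commute)
  have mirror_potential: "mirror.potential a p k = potential a p (- k)" for a p k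
    unfolding mirror.potential_def potential_def mirror_tv mirror.K_def K_def mirror.P_def P_def by simp
  have residual: "(\<Sum>t\<in>A. - y t - - u t) = - (\<Sum>t\<in>A. y t - u t)"
    and weighted: "(\<Sum>t\<in>A. - u t * (- y t - - u t)) = (\<Sum>t\<in>A. u t * (y t - u t))" for A :: "nat set"
    by (simp_all add: sum_negf[symmetric] algebra_simps)
  have mirror_invariant: "mirror.invariant m a p k \<longleftrightarrow> invariant m a p (- k)" for m a p k
    unfolding mirror.invariant_def invariant_def mirror_tv mirror_change_point mirror_regret
      mirror_potential residual weighted mirror.margin_def margin_def mirror.K_def K_def
    by (auto simp: algebra_simps)
  obtain a' p' k' where "mirror.invariant m a' p' k'"
    using mirror.invariant_step_peak[of m0 a p "- k" m "- v"] inv cp \<open>m0 < m\<close> const valley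
    by (auto simp: mirror_invariant mirror_change_point)
  then have "invariant m a' p' (- k')" using mirror_invariant by simp
  then show ?thesis by blast
qed

lemma invariant_step:
  assumes inv: "invariant m0 a p k" and cp: "change_point m" and "m0 < m"
    and no_change_point: "\<And>t. m0 < t \<Longrightarrow> t < m \<Longrightarrow> \<not> change_point t"
  shows "\<exists>a' p' k'. invariant m a' p' k'"
proof -
  have cp0: "change_point m0" using inv unfolding invariant_def by simp
  define v where "v = u m"
  have const: "\<forall>t\<in>{Suc m0..m}. u t = v"
    unfolding v_def using cp no_change_point by (auto intro!: u_eq_if_no_change_point simp: change_point_def)
  have "u (Suc m0) = v" "u m = v" using const \<open>m0 < m\<close> by auto
  then have "v \<noteq> u m0" "u (Suc m) \<noteq> v" using cp0 cp unfolding change_point_def by auto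
  then consider "(u m0 < v \<and> v < u (Suc m)) \<or> (v < u m0 \<and> u (Suc m) < v)"
    | "u m0 < v" "u (Suc m) < v" | "v < u m0" "v < u (Suc m)"
    by linarith
  then show ?thesis
    by cases (use invariant_step_monotone[OF inv cp \<open>m0 < m\<close> const] invariant_step_peak[OF inv cp \<open>m0 < m\<close> const]
        invariant_step_valley[OF inv cp \<open>m0 < m\<close> const] in blast)+
qed

lemma invariant_first_change_point:
  assumes cp: "change_point m" and first: "\<And>t. t < m \<Longrightarrow> \<not> change_point t"
  shows "invariant m (Suc m) m 0"
proof -
  have "1 \<le> m" "m < n" using cp unfolding change_point_def by auto
  have "\<forall>t\<in>{1..m}. u t = u m"
    using \<open>m < n\<close> first by (auto intro!: u_eq_if_no_change_point)
  from regret_constant_piece[OF _ _ _ this] have "(\<Sum>t=1..m. regret t) \<le> R"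
    using u_bound[of m] \<open>1 \<le> m\<close> \<open>m < n\<close> by simp
  moreover have "R \<le> potential (Suc m) m 0"
    unfolding potential_def using K_pos l0_pos V0_pos P_pos B_pos tv_nonneg by simp
  ultimately show ?thesis
    unfolding invariant_def using cp \<open>1 \<le> m\<close> l0_pos V0_pos tv_empty[of m "Suc m"] by simp
qed

lemma invariant_at_change_point: "change_point m \<Longrightarrow> \<exists>a p k. invariant m a p k"
proof (induction m rule: less_induct)
  case (less m)
  show ?case
  proof (cases "\<exists>t<m. change_point t")
    case False
    then show ?thesis using invariant_first_change_point less.prems by blast
  next
    case True
    define m0 where "m0 = (GREATEST t. t < m \<and> change_point t)"
    have m0: "m0 < m" "change_point m0"
      using GreatestI_ex_nat[of "\<lambda>t. t < m \<and> change_point t" m] True unfolding m0_def by auto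
    have "\<not> change_point t" if "m0 < t" "t < m" for t
      using Greatest_le_nat[of "\<lambda>t. t < m \<and> change_point t" t m] that unfolding m0_def by auto
    then show ?thesis using less.IH m0 invariant_step less.prems by blast
  qed
qed

lemma potential_le:
  assumes "1 \<le> a" "a \<le> n" "1 \<le> p" "p \<le> n" "\<bar>k\<bar> \<le> 1"
  shows "potential a p k \<le> (K / l0) * real n + (K / V0) * tv 1 n + (P / B) * tv 1 n + P + R"
proof -
  have "(K / l0) * real (a - 1) \<le> (K / l0) * real n"
    using assms K_pos l0_pos by (intro mult_left_mono) auto
  moreover have "(K / V0) * tv 1 a \<le> (K / V0) * tv 1 n"
    using assms K_pos V0_pos by (intro mult_left_mono tv_mono) auto
  moreover have "(P / B) * tv 1 p \<le> (P / B) * tv 1 n"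
    using assms P_pos B_pos by (intro mult_left_mono tv_mono) auto
  moreover have "P * \<bar>k\<bar> \<le> P" using assms(5) P_pos by simp
  ultimately show ?thesis unfolding potential_def by linarith
qed

theorem regret_le:
  "(\<Sum>t=1..n. regret t) \<le> (K / l0) * real n + (K / V0 + P / B) * tv 1 n + P + 3 * R + 1"
proof (cases "\<exists>t. change_point t")
  case False
  have "\<forall>t\<in>{1..n}. u t = u n"
    using False by (auto intro!: u_eq_if_no_change_point)
  from regret_constant_piece[OF _ _ _ this] have "(\<Sum>t=1..n. regret t) \<le> R"
    using u_bound[of n] R_nonneg by (cases "n = 0") simp_all
  then show ?thesis
    using K_pos l0_pos V0_pos P_pos B_pos tv_nonneg[of 1 n] R_nonneg
    by (smt (verit) divide_nonneg_nonneg mult_nonneg_nonneg of_nat_0_le_iff)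
next
  case True
  define ms where "ms = (GREATEST t. change_point t)"
  have bounded: "change_point t \<Longrightarrow> t \<le> n" for t unfolding change_point_def by simp
  have ms: "change_point ms" using True GreatestI_ex_nat[of change_point n] bounded unfolding ms_def by blast
  have last: "\<not> change_point t" if "ms < t" for t
    using Greatest_le_nat[of change_point t n] bounded that unfolding ms_def by fastforce
  obtain a p k where inv: "invariant ms a p k" using invariant_at_change_point[OF ms] by blast
  then have a: "1 \<le> a" "a \<le> Suc ms" "1 \<le> p" "p < a" and k: "k \<in> {-1, 0, 1}"
    and open_bin: "(\<Sum>t=a..ms. y t - u t) = 0" "(\<Sum>t=a..ms. u t * (y t - u t)) = 0"
      "real (Suc ms - a) < l0" "tv a ms < V0"
    and past: "(\<Sum>t=1..a-1. regret t) \<le> potential a p k"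
    unfolding invariant_def by auto
  have "1 \<le> ms" "ms < n" using ms unfolding change_point_def by auto
  have "\<forall>t\<in>{Suc ms..n}. u t = u n"
    using last \<open>ms < n\<close> by (auto intro!: u_eq_if_no_change_point)
  from regret_constant_piece[OF _ _ _ this] have tail: "(\<Sum>t=Suc ms..n. regret t) \<le> R"
    using u_bound[of n] \<open>ms < n\<close> by simp
  have "(\<Sum>t=1..n. regret t) = (\<Sum>t=1..a-1. regret t) + (\<Sum>t=a..ms. regret t) + (\<Sum>t=Suc ms..n. regret t)"
    using a \<open>ms < n\<close> sum_split_at[of 1 "a - 1" n regret] sum_split_at[of a ms n regret] by simp
  also have "\<dots> \<le> potential a p k + (R + 1) + R"
    using past regret_balanced_bin[OF a(1,2) _ open_bin] \<open>ms < n\<close> tail by fastforce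
  also have "potential a p k \<le> (K / l0) * real n + (K / V0) * tv 1 n + (P / B) * tv 1 n + P + R"
    using a k \<open>ms < n\<close> by (intro potential_le) auto
  finally show ?thesis by (simp add: algebra_simps)
qed

end

section \<open>The regret bound\<close>

lemma offline_kkt_tv_eq:
  "offline_kkt B Cn n y u lam gm gp \<Longrightarrow> 0 < lam \<Longrightarrow> (\<Sum>t=2..n. \<bar>u t - u (t - 1)\<bar>) = Cn"
  unfolding offline_kkt_def by auto

lemma tv_feasible_tv_le:
  assumes "tv_feasible B Cn n u" "0 \<le> B"
  shows "(\<Sum>t=2..n. \<bar>u t - u (t - 1)\<bar>) \<le> 2 * B * real n"
proof -
  have "(\<Sum>t=2..n. \<bar>u t - u (t - 1)\<bar>) \<le> (\<Sum>t=2..n. 2 * B)"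
  proof (rule sum_mono)
    fix t assume "t \<in> {2..n}"
    then have "t \<in> {1..n}" "t - 1 \<in> {1..n}" by auto
    then have "- B \<le> u t \<and> u t \<le> B" "- B \<le> u (t - 1) \<and> u (t - 1) \<le> B"
      using assms(1) unfolding tv_feasible_def by blast+
    then show "\<bar>u t - u (t - 1)\<bar> \<le> 2 * B" by linarith
  qed
  also have "\<dots> = 2 * B * real (n - 1)" by simp
  also have "\<dots> \<le> 2 * B * real n" using assms(2) by (intro mult_left_mono) auto
  finally show ?thesis .
qed

lemma flh_ogd_regret_le_bins:
  fixes n :: nat and B G :: real
  defines "R \<equiv> 6 * (G + B)\<^sup>2 * ln (real n)"
  assumes n: "3 \<le> n" and B: "0 < B" "0 \<le> G" "- B \<le> x0" "x0 \<le> B" and y: "\<forall>t\<in>{1..n}. \<bar>y t\<bar> \<le> G"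
    and opt: "offline_opt B Cn n y u" and kkt: "offline_kkt B Cn n y u lam gm gp" and "0 < lam"
    and bins: "0 < l0" "0 < V0" "l0 * V0\<^sup>2 \<le> 1" "l0 * ((4 * R + 4) / (2 * lam))\<^sup>2 \<le> 4 * R + 4"
      "(4 * R + 4) / (2 * lam) \<le> B / 2"
  shows "(\<Sum>t=1..n. (y t - flh_ogd_pred B G x0 y t)\<^sup>2 - (y t - u t)\<^sup>2)
    \<le> ((4 * R + 4) / l0) * real n + ((4 * R + 4) / V0 + (2 * R + 2) / B) * Cn + (2 * R + 2) + 3 * R + 1"
proof -
  obtain s where s_sgn: "\<forall>t\<in>{1..<n}. u (t + 1) \<noteq> u t \<longrightarrow> s t = sgn (u (t + 1) - u t)"
    and stationarity: "\<forall>t\<in>{1..n}. u t - y t = lam * (s t - s (t - 1)) + gm t - gp t"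
    using kkt unfolding offline_kkt_def by blast
  have "1 \<le> ln (real n)" using n by (rule one_le_ln)
  interpret kkt_comparator n B lam R l0 V0 y u "flh_ogd_pred B G x0 y" s gm gp
  proof unfold_locales
    show "\<forall>t\<in>{1..n}. - B \<le> u t \<and> u t \<le> B"
      using opt unfolding offline_opt_def tv_feasible_def by blast
    show "\<forall>t\<in>{1..n}. gm t * (u t + B) = 0 \<and> gp t * (u t - B) = 0"
      using kkt unfolding offline_kkt_def by blast
    show "0 \<le> R" unfolding R_def using \<open>1 \<le> ln (real n)\<close> by simp
    fix a b w assume "1 \<le> a" "a \<le> b" "b \<le> n" "- B \<le> w" "w \<le> B"
    then show "(\<Sum>t=a..b. (y t - flh_ogd_pred B G x0 y t)\<^sup>2) \<le> (\<Sum>t=a..b. (y t - w)\<^sup>2) + R"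
      unfolding R_def using n B y by (intro flh_ogd_interval_regret) auto
  qed (use B s_sgn stationarity \<open>0 < lam\<close> bins in auto)
  have "tv 1 n = Cn"
    using offline_kkt_tv_eq[OF kkt \<open>0 < lam\<close>]
    unfolding tv_def atLeastSucAtMost_greaterThanAtMost[symmetric] by (simp add: numeral_2_eq_2)
  then show ?thesis using regret_le unfolding regret_def K_def P_def by simp
qed

lemma powr_one_third:
  fixes x :: real
  assumes "0 < x"
  shows "(x powr (1/3)) ^ 3 = x" "(x powr (1/3))\<^sup>2 = x powr (2/3)"
  using assms by (simp_all add: powr_numeral[symmetric] powr_powr)

lemma cube_le_mult_square:
  fixes a b c :: real
  assumes "0 < a" "0 \<le> b" "1 \<le> c" "b ^ 3 \<le> c * a ^ 3"
  shows "b ^ 3 \<le> c * (a * b\<^sup>2)"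
proof -
  have "c * 1 \<le> c * c\<^sup>2" using assms(3) by (intro mult_left_mono one_le_power) auto
  then have "c * a ^ 3 \<le> c ^ 3 * a ^ 3"
    using assms(1) by (intro mult_right_mono) (auto simp: power3_eq_cube power2_eq_square)
  then have "b ^ 3 \<le> (c * a) ^ 3" using assms(4) by (simp add: power_mult_distrib)
  then have "b \<le> c * a" using assms by simp
  then have "b * b\<^sup>2 \<le> c * a * b\<^sup>2" by (intro mult_right_mono) auto
  then show ?thesis by (simp add: power3_eq_cube power2_eq_square algebra_simps)
qed

text \<open>With \<open>a = n\<^sup>1\<^sup>/\<^sup>3\<close> and \<open>b = Cn\<^sup>1\<^sup>/\<^sup>3\<close>, these bin sizes balance the two terms \<open>K n / l0\<close> and
  \<open>K Cn / V0\<close>; the lower bound \<open>\<phi> a / b \<le> lam\<close> is exactly what makes \<open>l0 margin\<^sup>2 \<le> K\<close>.\<close>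
lemma bin_sizes:
  fixes a b phi K lam :: real
  defines "l0 \<equiv> 4 * phi\<^sup>2 * a\<^sup>2 / (K * b\<^sup>2)" and "V0 \<equiv> b / (2 * phi * a)"
  assumes "0 < a" "0 < b" "0 < phi" "0 < K" and lam: "phi * a / b \<le> lam"
  shows "0 < l0" "0 < V0" "l0 * V0\<^sup>2 = 1 / K" "l0 * (K / (2 * lam))\<^sup>2 \<le> K"
    "(K / l0) * a ^ 3 = K\<^sup>2 / (4 * phi\<^sup>2) * (a * b\<^sup>2)" "(K / V0) * b ^ 3 = 2 * phi * K * (a * b\<^sup>2)"
proof -
  show "0 < l0" "0 < V0" unfolding l0_def V0_def using assms by auto
  show "l0 * V0\<^sup>2 = 1 / K" "(K / l0) * a ^ 3 = K\<^sup>2 / (4 * phi\<^sup>2) * (a * b\<^sup>2)"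
    "(K / V0) * b ^ 3 = 2 * phi * K * (a * b\<^sup>2)"
    unfolding l0_def V0_def using assms by (simp_all add: field_simps power2_eq_square power3_eq_cube)
  have "0 < phi * a / b" using assms by simp
  then have "0 < lam" using lam by linarith
  have "l0 * (K / (2 * lam))\<^sup>2 = K * ((phi * a / b)\<^sup>2 / lam\<^sup>2)"
    unfolding l0_def using assms \<open>0 < lam\<close> by (simp add: field_simps power2_eq_square)
  also have "\<dots> \<le> K * 1"
    using lam \<open>0 < phi * a / b\<close> \<open>0 < K\<close> by (intro mult_left_mono) (auto simp: divide_le_eq_1 power_mono)
  finally show "l0 * (K / (2 * lam))\<^sup>2 \<le> K" by simp
qed

lemma flh_ogd_regret_large_lambda:
  fixes n :: nat and B G Cn phi lam :: real
  defines "K \<equiv> 24 * (G + B)\<^sup>2 * ln (real n) + 4" and "N \<equiv> real n powr (1/3) * Cn powr (2/3)"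
  assumes n: "3 \<le> n" and B: "1 \<le> B" "0 \<le> G" "- B \<le> x0" "x0 \<le> B" and y: "\<forall>t\<in>{1..n}. \<bar>y t\<bar> \<le> G"
    and "0 < Cn" and opt: "offline_opt B Cn n y u" and kkt: "offline_kkt B Cn n y u lam gm gp"
    and "0 < phi" and lam: "phi * real n powr (1/3) / Cn powr (1/3) \<le> lam" and "K \<le> B * lam"
  shows "(\<Sum>t=1..n. (y t - flh_ogd_pred B G x0 y t)\<^sup>2 - (y t - u t)\<^sup>2)
    \<le> (K\<^sup>2 / (4 * phi\<^sup>2) + 2 * phi * K + K) * N + 2 * K"
proof -
  define R where "R = 6 * (G + B)\<^sup>2 * ln (real n)"
  define a where "a = real n powr (1/3)"
  define b where "b = Cn powr (1/3)"
  have a: "0 < a" "a ^ 3 = real n" and b: "0 < b" "b ^ 3 = Cn"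
    using n \<open>0 < Cn\<close> powr_one_third[of "real n"] powr_one_third[of Cn] unfolding a_def b_def by auto
  have N: "N = a * b\<^sup>2" unfolding N_def a_def b_def using powr_one_third(2)[OF \<open>0 < Cn\<close>] by simp
  have "0 \<le> R" unfolding R_def using one_le_ln[OF n] by simp
  then have K: "K = 4 * R + 4" "0 < K" "0 \<le> R" unfolding K_def R_def by (simp_all add: algebra_simps)
  have lam': "phi * a / b \<le> lam" using lam unfolding a_def b_def .
  then have "0 < lam" using \<open>0 < phi\<close> a b by (smt (verit) divide_pos_pos mult_pos_pos)
  define l0 where "l0 = 4 * phi\<^sup>2 * a\<^sup>2 / (K * b\<^sup>2)"
  define V0 where "V0 = b / (2 * phi * a)"
  note bins = bin_sizes[OF a(1) b(1) \<open>0 < phi\<close> K(2) lam', folded l0_def V0_def]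
  have "l0 * V0\<^sup>2 \<le> 1" using bins(3) K(1,3) by simp
  moreover have "K / (2 * lam) \<le> B / 2" using \<open>K \<le> B * lam\<close> \<open>0 < lam\<close> by (simp add: field_simps)
  ultimately have "(\<Sum>t=1..n. (y t - flh_ogd_pred B G x0 y t)\<^sup>2 - (y t - u t)\<^sup>2)
      \<le> (K / l0) * real n + (K / V0 + (2 * R + 2) / B) * Cn + (2 * R + 2) + 3 * R + 1"
    using flh_ogd_regret_le_bins[OF n _ B(2-4) y opt kkt \<open>0 < lam\<close>] bins(1,2,4) B(1)
    unfolding K(1) R_def by simp
  also have "(K / l0) * real n = K\<^sup>2 / (4 * phi\<^sup>2) * N"
    using bins(5) unfolding N a(2) .
  also have "(K / V0 + (2 * R + 2) / B) * Cn = 2 * phi * K * N + (2 * R + 2) / B * Cn"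
    using bins(6) unfolding N b(2) by (simp add: distrib_right)
  also have "(2 * R + 2) / B * Cn \<le> K * N"
  proof -
    have "Cn \<le> 2 * B * real n"
      using tv_feasible_tv_le[of B Cn n u] offline_kkt_tv_eq[OF kkt \<open>0 < lam\<close>] opt B(1)
      unfolding offline_opt_def by simp
    then have "Cn \<le> 2 * B * N"
      using cube_le_mult_square[of a b "2 * B"] a b B(1) unfolding N by simp
    then have "(2 * R + 2) / B * Cn \<le> (2 * R + 2) / B * (2 * B * N)"
      using K(3) B(1) by (intro mult_left_mono) auto
    also have "\<dots> = K * N" using B(1) unfolding K(1) by (simp add: field_simps)
    finally show ?thesis .
  qed
  finally show ?thesis using K by (simp add: algebra_simps)
qed

lemma flh_ogd_regret_small_lambda:
  fixes n :: nat and B G Cn phi lam K :: real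
  defines "N \<equiv> real n powr (1/3) * Cn powr (2/3)"
  assumes n: "3 \<le> n" and B: "1 \<le> B" "- B \<le> x0" "x0 \<le> B" and y: "\<forall>t\<in>{1..n}. \<bar>y t\<bar> \<le> G"
    and "0 < Cn" and "0 < phi" and lam: "phi * real n powr (1/3) / Cn powr (1/3) \<le> lam" and "B * lam < K"
  shows "(\<Sum>t=1..n. (y t - flh_ogd_pred B G x0 y t)\<^sup>2 - (y t - u t)\<^sup>2) \<le> (G + B)\<^sup>2 * (K / phi)\<^sup>2 * N"
proof -
  define a where "a = real n powr (1/3)"
  define b where "b = Cn powr (1/3)"
  have a: "0 < a" "a ^ 3 = real n" and b: "0 < b" "b\<^sup>2 = Cn powr (2/3)"
    using n \<open>0 < Cn\<close> powr_one_third[of "real n"] powr_one_third[of Cn] unfolding a_def b_def by auto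
  have "0 < phi * a / b" using \<open>0 < phi\<close> a b by simp
  moreover have "phi * a / b \<le> lam" using lam unfolding a_def b_def .
  ultimately have "phi * (a / b) < K" using \<open>B * lam < K\<close> B(1) by (smt (verit) mult_le_cancel_right1 times_divide_eq_right)
  then have "(a / b)\<^sup>2 \<le> (K / phi)\<^sup>2"
    using a b \<open>0 < phi\<close> by (intro power_mono) (auto simp: field_simps)
  then have "(a / b)\<^sup>2 * (a * b\<^sup>2) \<le> (K / phi)\<^sup>2 * (a * b\<^sup>2)"
    using a b by (intro mult_right_mono) auto
  moreover have "(a / b)\<^sup>2 * (a * b\<^sup>2) = real n"
    using a(2) b(1) by (simp add: field_simps power2_eq_square power3_eq_cube)
  moreover have "N = a * b\<^sup>2" using b(2) unfolding N_def a_def b_def by simp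
  ultimately have "real n \<le> (K / phi)\<^sup>2 * N" by simp
  then have "real n * (G + B)\<^sup>2 \<le> (K / phi)\<^sup>2 * N * (G + B)\<^sup>2" by (intro mult_right_mono) auto
  then show ?thesis using flh_ogd_regret_le_trivial[OF y _ B(2,3), of u] B(1) by (simp add: algebra_simps)
qed

definition flh_ogd_poly :: "real \<Rightarrow> real \<Rightarrow> real \<Rightarrow> real \<Rightarrow> real" where
  "flh_ogd_poly B G phi K = ((G + B)\<^sup>2 / phi\<^sup>2 + 1 / (4 * phi\<^sup>2)) * K\<^sup>2 + (2 * phi + 3) * K"

lemma flh_ogd_poly_pos: "0 < phi \<Longrightarrow> 0 < K \<Longrightarrow> 0 < flh_ogd_poly B G phi K"
  unfolding flh_ogd_poly_def by (intro add_nonneg_pos mult_pos_pos) auto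

lemma flh_ogd_poly_le_scaled:
  assumes "0 < phi" "0 \<le> K" "K \<le> c * L" "1 \<le> L"
  shows "flh_ogd_poly B G phi K \<le> flh_ogd_poly B G phi c * L\<^sup>2"
proof -
  have "0 \<le> c * L" using assms(2,3) by linarith
  then have "0 \<le> c" using assms(4) by (simp add: zero_le_mult_iff)
  have "K\<^sup>2 \<le> (c * L)\<^sup>2" using assms(2,3) by (intro power_mono)
  moreover have "K \<le> c * L\<^sup>2"
    using assms(3,4) \<open>0 \<le> c\<close> mult_left_mono[of L "L\<^sup>2" c] by (simp add: power2_eq_square)
  ultimately have "flh_ogd_poly B G phi K
      \<le> ((G + B)\<^sup>2 / phi\<^sup>2 + 1 / (4 * phi\<^sup>2)) * (c * L)\<^sup>2 + (2 * phi + 3) * (c * L\<^sup>2)"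
    unfolding flh_ogd_poly_def using assms(1) by (intro add_mono mult_left_mono) auto
  then show ?thesis unfolding flh_ogd_poly_def by (simp add: algebra_simps power_mult_distrib)
qed

lemma flh_ogd_regret_le_poly:
  fixes n :: nat and B G Cn phi lam :: real
  defines "K \<equiv> 24 * (G + B)\<^sup>2 * ln (real n) + 4" and "N \<equiv> real n powr (1/3) * Cn powr (2/3)"
  assumes n: "3 \<le> n" and B: "1 \<le> B" "B \<le> G" "- B \<le> x0" "x0 \<le> B" and y: "\<forall>t\<in>{1..n}. \<bar>y t\<bar> \<le> G"
    and "0 < Cn" and opt: "offline_opt B Cn n y u" and kkt: "offline_kkt B Cn n y u lam gm gp"
    and "0 < phi" and lam: "phi * real n powr (1/3) / Cn powr (1/3) \<le> lam"
  shows "(\<Sum>t=1..n. (y t - flh_ogd_pred B G x0 y t)\<^sup>2 - (y t - u t)\<^sup>2) \<le> flh_ogd_poly B G phi K * max N 1"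
proof -
  have "0 \<le> 24 * (G + B)\<^sup>2 * ln (real n)" using one_le_ln[OF n] by simp
  then have "0 < K" unfolding K_def by linarith
  have "0 \<le> N" unfolding N_def by simp
  show ?thesis
  proof (cases "K \<le> B * lam")
    case True
    then have "(\<Sum>t=1..n. (y t - flh_ogd_pred B G x0 y t)\<^sup>2 - (y t - u t)\<^sup>2)
        \<le> (K\<^sup>2 / (4 * phi\<^sup>2) + 2 * phi * K + K) * N + 2 * K"
      unfolding K_def N_def using assms B(1,2) by (intro flh_ogd_regret_large_lambda) auto
    also have "\<dots> \<le> (K\<^sup>2 / (4 * phi\<^sup>2) + 2 * phi * K + K) * max N 1 + 2 * K * max N 1"
      using \<open>0 < K\<close> \<open>0 < phi\<close> by (intro add_mono mult_left_mono) auto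
    also have "\<dots> \<le> flh_ogd_poly B G phi K * max N 1"
      unfolding flh_ogd_poly_def by (simp add: algebra_simps)
    finally show ?thesis .
  next
    case False
    then have "(\<Sum>t=1..n. (y t - flh_ogd_pred B G x0 y t)\<^sup>2 - (y t - u t)\<^sup>2) \<le> (G + B)\<^sup>2 * (K / phi)\<^sup>2 * N"
      unfolding N_def using assms by (intro flh_ogd_regret_small_lambda) auto
    also have "\<dots> \<le> flh_ogd_poly B G phi K * max N 1"
    proof (intro mult_mono)
      show "(G + B)\<^sup>2 * (K / phi)\<^sup>2 \<le> flh_ogd_poly B G phi K"
        unfolding flh_ogd_poly_def using \<open>0 < K\<close> \<open>0 < phi\<close> by (simp add: power_divide distrib_right)
    qed (use \<open>0 \<le> N\<close> flh_ogd_poly_pos[OF \<open>0 < phi\<close> \<open>0 < K\<close>, THEN less_imp_le] in auto)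
    finally show ?thesis .
  qed
qed

lemma flh_ogd_regret_bound:
  fixes n :: nat and B G Cn phi lam :: real
  assumes "3 \<le> n" "1 \<le> B" "B \<le> G" "- B \<le> x0" "x0 \<le> B" "\<forall>t\<in>{1..n}. \<bar>y t\<bar> \<le> G"
    and "0 < Cn" "offline_opt B Cn n y u" "offline_kkt B Cn n y u lam gm gp"
    and "0 < phi" "phi * real n powr (1/3) / Cn powr (1/3) \<le> lam"
  shows "(\<Sum>t=1..n. (y t - flh_ogd_pred B G x0 y t)\<^sup>2 - (y t - u t)\<^sup>2)
    \<le> flh_ogd_poly B G phi (24 * (G + B)\<^sup>2 + 4) * ln (real n) powr 2
      * max (real n powr (1/3) * Cn powr (2/3)) 1"
proof -
  have L: "1 \<le> ln (real n)" using assms(1) by (rule one_le_ln)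
  then have "0 \<le> 24 * (G + B)\<^sup>2 * ln (real n)" by simp
  then have "flh_ogd_poly B G phi (24 * (G + B)\<^sup>2 * ln (real n) + 4)
      \<le> flh_ogd_poly B G phi (24 * (G + B)\<^sup>2 + 4) * (ln (real n))\<^sup>2"
    using L assms(10) by (intro flh_ogd_poly_le_scaled) (auto simp: algebra_simps)
  then have "flh_ogd_poly B G phi (24 * (G + B)\<^sup>2 * ln (real n) + 4) * max (real n powr (1/3) * Cn powr (2/3)) 1
      \<le> flh_ogd_poly B G phi (24 * (G + B)\<^sup>2 + 4) * (ln (real n))\<^sup>2 * max (real n powr (1/3) * Cn powr (2/3)) 1"
    by (rule mult_right_mono) simp
  moreover have "ln (real n) powr 2 = (ln (real n))\<^sup>2" using L by (simp add: powr_numeral)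
  ultimately show ?thesis using flh_ogd_regret_le_poly[OF assms] by simp
qed

theorem lemma8:
  shows "\<exists>p::real. p \<ge> 0 \<and>
    (\<forall>B G phi :: real. B \<ge> 1 \<longrightarrow> G \<ge> B \<longrightarrow> phi > 0 \<longrightarrow>
      (\<exists>c::real. c > 0 \<and>
        (\<forall>(n::nat) (Cn::real) (y::nat \<Rightarrow> real) (u::nat \<Rightarrow> real) (lam::real)
            (gm::nat \<Rightarrow> real) (gp::nat \<Rightarrow> real) (x0::real).
          n \<ge> 3 \<longrightarrow> Cn > 0 \<longrightarrow> - B \<le> x0 \<longrightarrow> x0 \<le> B \<longrightarrow>
          (\<forall>t \<in> {1..n}. \<bar>y t\<bar> \<le> G) \<longrightarrow>
          offline_opt B Cn n y u \<longrightarrow>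
          offline_kkt B Cn n y u lam gm gp \<longrightarrow>
          lam \<ge> phi * real n powr (1/3) / Cn powr (1/3) \<longrightarrow>
          (\<Sum>t = 1..n. (y t - flh_ogd_pred B G x0 y t)^2 - (y t - u t)^2)
            \<le> c * ln (real n) powr p * max (real n powr (1/3) * Cn powr (2/3)) 1)))"
proof (rule exI[of _ "2::real"], intro conjI allI impI)
  fix B G phi :: real
  assume "1 \<le> B" "B \<le> G" "0 < phi"
  moreover have "0 < flh_ogd_poly B G phi (24 * (G + B)\<^sup>2 + 4)"
    using \<open>0 < phi\<close> by (intro flh_ogd_poly_pos) (auto simp: add_nonneg_pos)
  ultimately show "\<exists>c>0. \<forall>n Cn y u lam gm gp x0. 3 \<le> n \<longrightarrow> 0 < Cn \<longrightarrow> - B \<le> x0 \<longrightarrow>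
      x0 \<le> B \<longrightarrow> (\<forall>t\<in>{1..n}. \<bar>y t\<bar> \<le> G) \<longrightarrow> offline_opt B Cn n y u \<longrightarrow>
      offline_kkt B Cn n y u lam gm gp \<longrightarrow> phi * real n powr (1/3) / Cn powr (1/3) \<le> lam \<longrightarrow>
      (\<Sum>t = 1..n. (y t - flh_ogd_pred B G x0 y t)\<^sup>2 - (y t - u t)\<^sup>2)
        \<le> c * ln (real n) powr 2 * max (real n powr (1/3) * Cn powr (2/3)) 1"
    by (blast intro: flh_ogd_regret_bound)
qed simp

end
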